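(* Let $\beta,\gamma\in(0,1]$ with $\beta\le\gamma$, let $f$ be a modulus function, $m\ge0$ an integer, $\theta=(k_r)$ a lacunary sequence, and $p=(p_k)$ a sequence of positive reals with $0<h=\inf_kp_k\le p_k\le\sup_kp_k=H<\infty$. Then $w_p^\beta(\theta,f,F,\Delta^m)\subset S_\theta^\gamma(F,\Delta^m)$.
   Context: A fuzzy number is a map $X:\mathbb{R}\to[0,1]$ which is normal, fuzzy convex, upper semicontinuous, with compact closure of $\{t:X(t)>0\}$; $L(\mathbb{R})$ is the set of fuzzy numbers. Level sets $[X]^\alpha=\{t:X(t)\ge\alpha\}$ ($\alpha\in(0,1]$), $[X]^0=\overline{\{t:X(t)>0\}}$, are compact intervals $[u^\alpha,v^\alpha]$. Subtraction: $[X-Y]^\alpha=[u_1^\alpha-v_2^\alpha,v_1^\alpha-u_2^\alpha]$. Metric: $d(X,Y)=\sup_{\alpha\in[0,1]}\max\{|u_1^\alpha-u_2^\alpha|,|v_1^\alpha-v_2^\alpha|\}$. $(\Delta^0X)_k=X_k$, $(\Delta^1X)_k=X_k-X_{k+1}$, $(\Delta^mX)_k=(\Delta^1(\Delta^{m-1}X))_k$. A lacunary sequence is an increasing integer sequence $\theta=(k_r)_{r\ge0}$ with $k_0=0$, $h_r=k_r-k_{r-1}\to\infty$; $I_r=(k_{r-1},k_r]$. A modulus function is $f:[0,\infty)\to[0,\infty)$ with $f(x)=0$ iff $x=0$, $f(x+y)\le f(x)+f(y)$, $f$ increasing, and $f$ right-continuous at $0$. $w_p^\beta(\theta,f,F,\Delta^m)$: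 sequences $X$ of fuzzy numbers with some $X_0\in L(\mathbb{R})$ such that $\lim_r\frac{1}{h_r^\beta}\sum_{k\in I_r}[f(d(\Delta^mX_k,X_0))]^{p_k}=0$. $S_\theta^\gamma(F,\Delta^m)$: sequences $X$ with some $X_0\in L(\mathbb{R})$ such that for all $\varepsilon>0$, $\lim_r\frac{1}{h_r^\gamma}|\{k\in I_r:d(\Delta^mX_k,X_0)\ge\varepsilon\}|=0$. *)

theory Defs
  imports "HOL-Analysis.Analysis"
begin

type_synonym fuzzy = "real \<Rightarrow> real"

definition usc :: "(real \<Rightarrow> real) \<Rightarrow> bool" where
  "usc X \<longleftrightarrow> (\<forall>a. open {t. X t < a})"

definition fuzzy_number :: "fuzzy \<Rightarrow> bool" where
  "fuzzy_number X \<longleftrightarrow>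
     (\<forall>t. 0 \<le> X t \<and> X t \<le> 1) \<and>
     (\<exists>t. X t = 1) \<and>
     (\<forall>x y l. 0 \<le> l \<and> l \<le> 1 \<longrightarrow> X (l * x + (1 - l) * y) \<ge> min (X x) (X y)) \<and>
     usc X \<and>
     compact (closure {t. X t > 0})"

definition level :: "fuzzy \<Rightarrow> real \<Rightarrow> real set" where
  "level X \<alpha> = (if \<alpha> > 0 then {t. X t \<ge> \<alpha>} else closure {t. X t > 0})"

definition lo :: "fuzzy \<Rightarrow> real \<Rightarrow> real" where
  "lo X \<alpha> = Inf (level X \<alpha>)"

definition hi :: "fuzzy \<Rightarrow> real \<Rightarrow> real" where
  "hi X \<alpha> = Sup (level X \<alpha>)"

text \<open>Subtraction, defined as the fuzzy number whose alpha-level sets are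
  [lo X a - hi Y a, hi X a - lo Y a].\<close>
definition fsub :: "fuzzy \<Rightarrow> fuzzy \<Rightarrow> fuzzy" where
  "fsub X Y = (\<lambda>t. Sup (insert 0 {\<alpha>. 0 < \<alpha> \<and> \<alpha> \<le> 1 \<and>
                      lo X \<alpha> - hi Y \<alpha> \<le> t \<and> t \<le> hi X \<alpha> - lo Y \<alpha>}))"

definition fdist :: "fuzzy \<Rightarrow> fuzzy \<Rightarrow> real" where
  "fdist X Y = (SUP \<alpha>\<in>{0..1}. max \<bar>lo X \<alpha> - lo Y \<alpha>\<bar> \<bar>hi X \<alpha> - hi Y \<alpha>\<bar>)"

fun fdelta :: "nat \<Rightarrow> (nat \<Rightarrow> fuzzy) \<Rightarrow> nat \<Rightarrow> fuzzy" where
  "fdelta 0 X k = X k"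
| "fdelta (Suc m) X k = fsub (fdelta m X k) (fdelta m X (Suc k))"

definition lacunary :: "(nat \<Rightarrow> nat) \<Rightarrow> bool" where
  "lacunary \<theta> \<longleftrightarrow> strict_mono \<theta> \<and> \<theta> 0 = 0 \<and>
     filterlim (\<lambda>r. real (\<theta> r - \<theta> (r - 1))) at_top sequentially"

definition hr :: "(nat \<Rightarrow> nat) \<Rightarrow> nat \<Rightarrow> nat" where
  "hr \<theta> r = \<theta> r - \<theta> (r - 1)"

definition Ir :: "(nat \<Rightarrow> nat) \<Rightarrow> nat \<Rightarrow> nat set" where
  "Ir \<theta> r = {\<theta> (r - 1)<..\<theta> r}"

definition modulus :: "(real \<Rightarrow> real) \<Rightarrow> bool" where
  "modulus f \<longleftrightarrow>
     (\<forall>x\<ge>0. f x \<ge> 0) \<and>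
     (\<forall>x\<ge>0. f x = 0 \<longleftrightarrow> x = 0) \<and>
     (\<forall>x\<ge>0. \<forall>y\<ge>0. f (x + y) \<le> f x + f y) \<and>
     mono_on {0..} f \<and>
     (f \<longlongrightarrow> 0) (at_right 0)"

definition w_set :: "real \<Rightarrow> (nat \<Rightarrow> nat) \<Rightarrow> (real \<Rightarrow> real) \<Rightarrow> (nat \<Rightarrow> real) \<Rightarrow> nat
                     \<Rightarrow> (nat \<Rightarrow> fuzzy) set" where
  "w_set \<beta> \<theta> f p m = {X. (\<forall>k. fuzzy_number (X k)) \<and>
     (\<exists>X0. fuzzy_number X0 \<and>
        (\<lambda>r. (\<Sum>k\<in>Ir \<theta> r. f (fdist (fdelta m X k) X0) powr p k) / real (hr \<theta> r) powr \<beta>)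
          \<longlonglongrightarrow> 0)}"

definition S_set :: "real \<Rightarrow> (nat \<Rightarrow> nat) \<Rightarrow> nat \<Rightarrow> (nat \<Rightarrow> fuzzy) set" where
  "S_set \<gamma> \<theta> m = {X. (\<forall>k. fuzzy_number (X k)) \<and>
     (\<exists>X0. fuzzy_number X0 \<and> (\<forall>\<epsilon>>0.
        (\<lambda>r. real (card {k\<in>Ir \<theta> r. fdist (fdelta m X k) X0 \<ge> \<epsilon>}) / real (hr \<theta> r) powr \<gamma>)
          \<longlonglongrightarrow> 0))}"

end

theory Submission
  imports Defs
begin

text \<open>If \<open>d k \<ge> \<epsilon>\<close> then \<open>f (d k) powr p k \<ge> min (f \<epsilon>) 1 powr H\<close>, a positive constant,
  so the number of such \<open>k \<in> I\<^sub>r\<close> is at most a constant multiple of the sum defining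
  \<open>w\<^sub>p\<^sup>\<beta>\<close>; dividing by \<open>h\<^sub>r\<^sup>\<gamma> \<ge> h\<^sub>r\<^sup>\<beta>\<close> only makes the density smaller.\<close>

lemma min_one_powr_le_powr:
  fixes a y q H :: real
  assumes "0 < a" "a \<le> y" "0 < q" "q \<le> H"
  shows "min a 1 powr H \<le> y powr q"
proof -
  have "min a 1 powr H \<le> min a 1 powr q"
    using assms by (intro powr_mono') auto
  also have "\<dots> \<le> y powr q"
    using assms by (intro powr_mono2) auto
  finally show ?thesis .
qed

lemma card_filter_mult_le_sum:
  fixes g :: "'a \<Rightarrow> real"
  assumes "finite A" "\<And>k. k \<in> A \<Longrightarrow> 0 \<le> g k" "\<And>k. k \<in> A \<Longrightarrow> P k \<Longrightarrow> c \<le> g k"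
  shows "real (card {k\<in>A. P k}) * c \<le> (\<Sum>k\<in>A. g k)"
proof -
  have "real (card {k\<in>A. P k}) * c = (\<Sum>k\<in>{k\<in>A. P k}. c)" by simp
  also have "\<dots> \<le> (\<Sum>k\<in>{k\<in>A. P k}. g k)"
    using assms(3) by (intro sum_mono) auto
  also have "\<dots> \<le> (\<Sum>k\<in>A. g k)"
    using assms(1,2) by (intro sum_mono2) auto
  finally show ?thesis .
qed

lemma divide_powr_antimono_exponent:
  fixes N h \<beta> \<gamma> :: real
  assumes "0 \<le> N" "1 \<le> h" "\<beta> \<le> \<gamma>"
  shows "N / h powr \<gamma> \<le> N / h powr \<beta>"
  using assms by (intro divide_left_mono powr_mono) auto

lemma hr_ge_one:
  assumes "strict_mono \<theta>" "1 \<le> r"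
  shows "1 \<le> hr \<theta> r"
  using strict_monoD[OF assms(1), of "r - 1" r] assms(2) unfolding hr_def by simp

lemma finite_Ir: "finite (Ir \<theta> r)"
  unfolding Ir_def by simp

lemma lacunary_strong_imp_statistical:
  fixes d :: "nat \<Rightarrow> real" and f :: "real \<Rightarrow> real" and p :: "nat \<Rightarrow> real"
  assumes "strict_mono \<theta>" "\<beta> \<le> \<gamma>"
    and "mono_on {0..} f" "\<forall>x\<ge>0. f x \<ge> 0" "0 < \<epsilon>" "0 < f \<epsilon>"
    and "\<And>k. 0 < p k" "\<And>k. p k \<le> H"
    and strong: "(\<lambda>r. (\<Sum>k\<in>Ir \<theta> r. f (d k) powr p k) / real (hr \<theta> r) powr \<beta>) \<longlonglongrightarrow> 0"
  shows "(\<lambda>r. real (card {k\<in>Ir \<theta> r. d k \<ge> \<epsilon>}) / real (hr \<theta> r) powr \<gamma>) \<longlonglongrightarrow> 0"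
proof -
  define c where "c = min (f \<epsilon>) 1 powr H"
  define S where "S r = (\<Sum>k\<in>Ir \<theta> r. f (d k) powr p k)" for r
  define N where "N r = real (card {k\<in>Ir \<theta> r. d k \<ge> \<epsilon>})" for r
  have "0 < c"
    unfolding c_def using \<open>0 < f \<epsilon>\<close> by simp
  have count_le: "N r * c \<le> S r" for r
    unfolding N_def S_def c_def
  proof (rule card_filter_mult_le_sum[OF finite_Ir])
    fix k assume "\<epsilon> \<le> d k"
    then have "f \<epsilon> \<le> f (d k)"
      using assms(3,5) by (auto intro: mono_onD)
    then show "min (f \<epsilon>) 1 powr H \<le> f (d k) powr p k"
      using assms(6-8) by (intro min_one_powr_le_powr) auto
  qed simp
  have bound: "N r / real (hr \<theta> r) powr \<gamma> \<le> S r / real (hr \<theta> r) powr \<beta> / c" if "1 \<le> r" for r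
  proof -
    have h: "1 \<le> real (hr \<theta> r)"
      using hr_ge_one[OF assms(1) that] by simp
    have "N r / real (hr \<theta> r) powr \<gamma> \<le> N r / real (hr \<theta> r) powr \<beta>"
      using h assms(2) by (intro divide_powr_antimono_exponent) (auto simp: N_def)
    also have "\<dots> \<le> S r / real (hr \<theta> r) powr \<beta> / c"
      using count_le[of r] \<open>0 < c\<close> h by (simp add: field_simps)
    finally show ?thesis .
  qed
  have "(\<lambda>r. S r / real (hr \<theta> r) powr \<beta> / c) \<longlonglongrightarrow> 0"
    using tendsto_divide[OF strong tendsto_const[of c]] \<open>0 < c\<close> unfolding S_def by simp
  then have "(\<lambda>r. N r / real (hr \<theta> r) powr \<gamma>) \<longlonglongrightarrow> 0"
  proof (rule tendsto_sandwich[rotated 2, OF tendsto_const])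
    show "\<forall>\<^sub>F r in sequentially. N r / real (hr \<theta> r) powr \<gamma> \<le> S r / real (hr \<theta> r) powr \<beta> / c"
      using bound by (rule eventually_sequentiallyI)
  qed (simp add: N_def)
  then show ?thesis
    unfolding N_def .
qed

theorem theorem3p2:
  fixes \<beta> \<gamma> :: real and f :: "real \<Rightarrow> real" and m :: nat
    and \<theta> :: "nat \<Rightarrow> nat" and p :: "nat \<Rightarrow> real"
  assumes "0 < \<beta>" "\<beta> \<le> 1" "0 < \<gamma>" "\<gamma> \<le> 1" "\<beta> \<le> \<gamma>"
    and "modulus f"
    and "lacunary \<theta>"
    and "\<forall>k. p k > 0"
    and "0 < Inf (range p)"
    and "bdd_above (range p)"
  shows "w_set \<beta> \<theta> f p m \<subseteq> S_set \<gamma> \<theta> m"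
proof
  fix X assume "X \<in> w_set \<beta> \<theta> f p m"
  then obtain X0 where "\<forall>k. fuzzy_number (X k)" "fuzzy_number X0"
    and strong: "(\<lambda>r. (\<Sum>k\<in>Ir \<theta> r. f (fdist (fdelta m X k) X0) powr p k)
                     / real (hr \<theta> r) powr \<beta>) \<longlonglongrightarrow> 0"
    unfolding w_set_def by blast
  have f: "mono_on {0..} f" "\<forall>x\<ge>0. f x \<ge> 0" "\<forall>x\<ge>0. f x = 0 \<longleftrightarrow> x = 0"
    using \<open>modulus f\<close> unfolding modulus_def by auto
  have "strict_mono \<theta>"
    using \<open>lacunary \<theta>\<close> unfolding lacunary_def by simp
  have p_le: "p k \<le> Sup (range p)" for k
    using \<open>bdd_above (range p)\<close> by (simp add: cSup_upper)
  have "\<forall>\<epsilon>>0. (\<lambda>r. real (card {k\<in>Ir \<theta> r. fdist (fdelta m X k) X0 \<ge> \<epsilon>})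
                    / real (hr \<theta> r) powr \<gamma>) \<longlonglongrightarrow> 0"
  proof (intro allI impI)
    fix \<epsilon> :: real assume "0 < \<epsilon>"
    with f have "0 < f \<epsilon>" by (metis less_eq_real_def)
    with \<open>0 < \<epsilon>\<close> show "(\<lambda>r. real (card {k\<in>Ir \<theta> r. fdist (fdelta m X k) X0 \<ge> \<epsilon>})
                    / real (hr \<theta> r) powr \<gamma>) \<longlonglongrightarrow> 0"
      using lacunary_strong_imp_statistical[OF \<open>strict_mono \<theta>\<close> \<open>\<beta> \<le> \<gamma>\<close> f(1,2) _ _ _ p_le strong]
        assms(8) by blast
  qed
  with \<open>\<forall>k. fuzzy_number (X k)\<close> \<open>fuzzy_number X0\<close> show "X \<in> S_set \<gamma> \<theta> m"
    unfolding S_set_def by blast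
qed

end
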